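(* Let $\mathcal G$ be a braided stability groupoid and let $V\colon U\mathcal G\to\mathcal D$ be a functor, where $\mathcal D=\mathrm{Set}$ or $\mathcal D=R\text{-Mod}$ for a ring $R$. Then $V$ is generated in ranks $\le d$ if and only if the map $(\Sigma V)_n\to V_n$ induced by $\iota_1\in\mathrm{Hom}(0,1)$ is surjective for all $n>d$.
   Context: Stability groupoid: monoidal groupoid $(\mathcal G,\oplus,0)$ with objects $(\mathbb N,+,0)$, $G_n=\mathrm{Aut}(n)$, $\oplus\colon G_m\times G_n\to G_{m+n}$ injective, $G_0$ trivial, $(G_{l+m}\times1)\cap(1\times G_{m+n})=1\times G_m\times1$; braided: with braiding $b_{m,n}\in G_{m+n}$. $U\mathcal G$: objects $\mathbb N$, $\mathrm{Hom}(m,n)=G_n/G_{n-m}$ for $m\le n$ ($G_{n-m}\subset G_n$ via $g\mapsto g\oplus\mathrm{id}_m$), empty otherwise, composition $fG_l\circ gG_m=f(\mathrm{id}_l\oplus g)G_{l+m}$, monoidal via $f_1G_{m_1}\oplus f_2G_{m_2}=(f_1\oplus f_2)(\mathrm{id}_{m_1}\oplus b^{-1}_{n_1,m_2}\oplus\mathrm{id}_{n_2})G_{m_1+m_2}$; $0$ initial, $\iota_n\colon0\to n$. $V_n=V(n)$. $\Sigma$ is the left adjoint of $V\mapsto V(-\oplus1)$; concretely $(\Sigma V)_n\cong G_n\times_{G_{n-1}}V_{n-1}$ (sets) or $RG_n\otimes_{RG_{n-1}}V_{n-1}$ (modules), $G_{n-1}\subset G_n$ via $g\mapsto g\oplus\mathrm{id}_1$,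 and the map induced by $\iota_1$ is $[g,x]\mapsto g\cdot V(\mathrm{id}_{n-1}\oplus\iota_1)(x)$ (resp. $g\otimes x\mapsto g\cdot V(\mathrm{id}_{n-1}\oplus\iota_1)(x)$). A $U\mathcal G$-set (resp. module) $V$ is generated in ranks $\le m$ if there is an epimorphism onto $V$ from a disjoint union $\coprod_j\mathrm{Hom}(m_j,-)$ (resp. a direct sum $\bigoplus_jR\mathrm{Hom}(m_j,-)$) with all $m_j\le m$. *)

theory Defs
  imports "HOL-Algebra.Module" "HOL-Algebra.Coset"
begin

text \<open>
A (strict) monoidal groupoid with objects (nat,+,0) is encoded by the family of
automorphism groups G n = Aut(n) (all with a common element type 'g) together with
the monoidal product on morphisms oplus m n : G m x G n -> G (m+n).
\<close>

definition stability_groupoid ::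
  "(nat \<Rightarrow> 'g monoid) \<Rightarrow> (nat \<Rightarrow> nat \<Rightarrow> 'g \<Rightarrow> 'g \<Rightarrow> 'g) \<Rightarrow> bool" where
  "stability_groupoid G oplus \<longleftrightarrow>
     (\<forall>n. group (G n))
   \<and> (\<forall>m n g h. g \<in> carrier (G m) \<longrightarrow> h \<in> carrier (G n) \<longrightarrow>
        oplus m n g h \<in> carrier (G (m + n)))
   \<and> (\<forall>m n g g' h h'. g \<in> carrier (G m) \<longrightarrow> g' \<in> carrier (G m) \<longrightarrow>
        h \<in> carrier (G n) \<longrightarrow> h' \<in> carrier (G n) \<longrightarrow>
        oplus m n (g \<otimes>\<^bsub>G m\<^esub> g') (h \<otimes>\<^bsub>G n\<^esub> h')
          = oplus m n g h \<otimes>\<^bsub>G (m + n)\<^esub> oplus m n g' h')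
   \<and> (\<forall>m n. oplus m n \<one>\<^bsub>G m\<^esub> \<one>\<^bsub>G n\<^esub> = \<one>\<^bsub>G (m + n)\<^esub>)
   \<and> (\<forall>l m n g h k. g \<in> carrier (G l) \<longrightarrow> h \<in> carrier (G m) \<longrightarrow> k \<in> carrier (G n) \<longrightarrow>
        oplus (l + m) n (oplus l m g h) k = oplus l (m + n) g (oplus m n h k))
   \<and> (\<forall>n h. h \<in> carrier (G n) \<longrightarrow> oplus 0 n \<one>\<^bsub>G 0\<^esub> h = h \<and> oplus n 0 h \<one>\<^bsub>G 0\<^esub> = h)
   \<and> carrier (G 0) = {\<one>\<^bsub>G 0\<^esub>}
   \<and> (\<forall>m n. inj_on (\<lambda>(g, h). oplus m n g h) (carrier (G m) \<times> carrier (G n)))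
   \<and> (\<forall>l m n.
        (\<lambda>g. oplus (l + m) n g \<one>\<^bsub>G n\<^esub>) ` carrier (G (l + m))
        \<inter> (\<lambda>h. oplus l (m + n) \<one>\<^bsub>G l\<^esub> h) ` carrier (G (m + n))
        = (\<lambda>g. oplus l (m + n) \<one>\<^bsub>G l\<^esub> (oplus m n g \<one>\<^bsub>G n\<^esub>)) ` carrier (G m))"

text \<open>Braiding b m n : m + n -> n + m, an element of G (m+n); naturality and the two
hexagon axioms (composition in a group written as f \<otimes> g = f after g).\<close>

definition braided_stability_groupoid ::
  "(nat \<Rightarrow> 'g monoid) \<Rightarrow> (nat \<Rightarrow> nat \<Rightarrow> 'g \<Rightarrow> 'g \<Rightarrow> 'g) \<Rightarrow> (nat \<Rightarrow> nat \<Rightarrow> 'g) \<Rightarrow> bool" where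
  "braided_stability_groupoid G oplus b \<longleftrightarrow>
     stability_groupoid G oplus
   \<and> (\<forall>m n. b m n \<in> carrier (G (m + n)))
   \<and> (\<forall>m n g h. g \<in> carrier (G m) \<longrightarrow> h \<in> carrier (G n) \<longrightarrow>
        b m n \<otimes>\<^bsub>G (m + n)\<^esub> oplus m n g h = oplus n m h g \<otimes>\<^bsub>G (m + n)\<^esub> b m n)
   \<and> (\<forall>l m n. b l (m + n)
        = oplus m (n + l) \<one>\<^bsub>G m\<^esub> (b l n) \<otimes>\<^bsub>G (l + m + n)\<^esub> oplus (l + m) n (b l m) \<one>\<^bsub>G n\<^esub>)
   \<and> (\<forall>l m n. b (l + m) n
        = oplus (n + l) m (b l n) \<one>\<^bsub>G m\<^esub> \<otimes>\<^bsub>G (l + m + n)\<^esub> oplus l (m + n) \<one>\<^bsub>G l\<^esub> (b m n))"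

definition sub_grp :: "(nat \<Rightarrow> 'g monoid) \<Rightarrow> (nat \<Rightarrow> nat \<Rightarrow> 'g \<Rightarrow> 'g \<Rightarrow> 'g) \<Rightarrow> nat \<Rightarrow> nat \<Rightarrow> 'g set" where
  "sub_grp G oplus k n = (\<lambda>g. oplus (n - k) k g \<one>\<^bsub>G k\<^esub>) ` carrier (G (n - k))"

text \<open>The morphism f G_{n-k} in Hom(k,n) represented by f \<in> G n.\<close>
definition umor :: "(nat \<Rightarrow> 'g monoid) \<Rightarrow> (nat \<Rightarrow> nat \<Rightarrow> 'g \<Rightarrow> 'g \<Rightarrow> 'g) \<Rightarrow> nat \<Rightarrow> nat \<Rightarrow> 'g \<Rightarrow> 'g set" where
  "umor G oplus k n f = f <#\<^bsub>G n\<^esub> sub_grp G oplus k n"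

definition uhom :: "(nat \<Rightarrow> 'g monoid) \<Rightarrow> (nat \<Rightarrow> nat \<Rightarrow> 'g \<Rightarrow> 'g \<Rightarrow> 'g) \<Rightarrow> nat \<Rightarrow> nat \<Rightarrow> 'g set set" where
  "uhom G oplus k n = (if k \<le> n then umor G oplus k n ` carrier (G n) else {})"

text \<open>Monoidal product of morphisms f1 G_{m1} : n1 -> m1+n1 and f2 G_{m2} : n2 -> m2+n2:
(f1 \<oplus> f2)(id_{m1} \<oplus> b^{-1}_{n1,m2} \<oplus> id_{n2}) G_{m1+m2}.\<close>
definition uoplus ::
  "(nat \<Rightarrow> 'g monoid) \<Rightarrow> (nat \<Rightarrow> nat \<Rightarrow> 'g \<Rightarrow> 'g \<Rightarrow> 'g) \<Rightarrow> (nat \<Rightarrow> nat \<Rightarrow> 'g) \<Rightarrow>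
   nat \<Rightarrow> nat \<Rightarrow> nat \<Rightarrow> nat \<Rightarrow> 'g \<Rightarrow> 'g \<Rightarrow> 'g set" where
  "uoplus G oplus b n1 m1 n2 m2 f1 f2 =
     umor G oplus (n1 + n2) (m1 + n1 + (m2 + n2))
       (oplus (m1 + n1) (m2 + n2) f1 f2 \<otimes>\<^bsub>G (m1 + n1 + (m2 + n2))\<^esub>
        oplus m1 (n1 + m2 + n2) \<one>\<^bsub>G m1\<^esub>
          (oplus (n1 + m2) n2 (inv\<^bsub>G (n1 + m2)\<^esub> (b n1 m2)) \<one>\<^bsub>G n2\<^esub>))"

text \<open>The morphism id_{n-1} \<oplus> \<iota>_1 : n-1 -> n, where id_{n-1} = 1 G_0 and \<iota>_1 = 1 G_1.\<close>
definition id_oplus_iota1 ::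
  "(nat \<Rightarrow> 'g monoid) \<Rightarrow> (nat \<Rightarrow> nat \<Rightarrow> 'g \<Rightarrow> 'g \<Rightarrow> 'g) \<Rightarrow> (nat \<Rightarrow> nat \<Rightarrow> 'g) \<Rightarrow> nat \<Rightarrow> 'g set" where
  "id_oplus_iota1 G oplus b n = uoplus G oplus b (n - 1) 0 0 1 \<one>\<^bsub>G (n - 1)\<^esub> \<one>\<^bsub>G 1\<^esub>"

definition set_functor ::
  "(nat \<Rightarrow> 'g monoid) \<Rightarrow> (nat \<Rightarrow> nat \<Rightarrow> 'g \<Rightarrow> 'g \<Rightarrow> 'g) \<Rightarrow>
   (nat \<Rightarrow> 'a set) \<Rightarrow> (nat \<Rightarrow> nat \<Rightarrow> 'g set \<Rightarrow> 'a \<Rightarrow> 'a) \<Rightarrow> bool" where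
  "set_functor G oplus V F \<longleftrightarrow>
     (\<forall>k n C x. C \<in> uhom G oplus k n \<longrightarrow> x \<in> V k \<longrightarrow> F k n C x \<in> V n)
   \<and> (\<forall>n x. x \<in> V n \<longrightarrow> F n n (umor G oplus n n \<one>\<^bsub>G n\<^esub>) x = x)
   \<and> (\<forall>k n p f g x. k \<le> n \<longrightarrow> n \<le> p \<longrightarrow> f \<in> carrier (G p) \<longrightarrow> g \<in> carrier (G n) \<longrightarrow> x \<in> V k \<longrightarrow>
        F n p (umor G oplus n p f) (F k n (umor G oplus k n g) x)
        = F k p (umor G oplus k p (f \<otimes>\<^bsub>G p\<^esub> oplus (p - n) n \<one>\<^bsub>G (p - n)\<^esub> g)) x)"

text \<open>Basis of the coproduct of representables \<coprod>_{j \<in> J} Hom(mj j, -) in rank n.\<close>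
definition rep_basis ::
  "(nat \<Rightarrow> 'g monoid) \<Rightarrow> (nat \<Rightarrow> nat \<Rightarrow> 'g \<Rightarrow> 'g \<Rightarrow> 'g) \<Rightarrow> 'j set \<Rightarrow> ('j \<Rightarrow> nat) \<Rightarrow> nat \<Rightarrow> ('j \<times> 'g set) set" where
  "rep_basis G oplus J mj n = {(j, C). j \<in> J \<and> C \<in> uhom G oplus (mj j) n}"

text \<open>Naturality of \<eta> : \<coprod>_{j \<in> J} Hom(mj j, -) \<Rightarrow> V (on basis elements).\<close>
definition rep_nat ::
  "(nat \<Rightarrow> 'g monoid) \<Rightarrow> (nat \<Rightarrow> nat \<Rightarrow> 'g \<Rightarrow> 'g \<Rightarrow> 'g) \<Rightarrow> 'j set \<Rightarrow> ('j \<Rightarrow> nat) \<Rightarrow>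
   (nat \<Rightarrow> 'a set) \<Rightarrow> (nat \<Rightarrow> nat \<Rightarrow> 'g set \<Rightarrow> 'a \<Rightarrow> 'a) \<Rightarrow> (nat \<Rightarrow> 'j \<times> 'g set \<Rightarrow> 'a) \<Rightarrow> bool" where
  "rep_nat G oplus J mj V F \<eta> \<longleftrightarrow>
     (\<forall>n. \<eta> n ` rep_basis G oplus J mj n \<subseteq> V n)
   \<and> (\<forall>j n p f g. j \<in> J \<longrightarrow> mj j \<le> n \<longrightarrow> n \<le> p \<longrightarrow> f \<in> carrier (G p) \<longrightarrow> g \<in> carrier (G n) \<longrightarrow>
        \<eta> p (j, umor G oplus (mj j) p (f \<otimes>\<^bsub>G p\<^esub> oplus (p - n) n \<one>\<^bsub>G (p - n)\<^esub> g))
        = F n p (umor G oplus n p f) (\<eta> n (j, umor G oplus (mj j) n g)))"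

text \<open>Generated in ranks \<le> d: an epimorphism (= levelwise surjective natural transformation)
onto V from a disjoint union of representables Hom(m_j,-), m_j \<le> d.  The index set is
taken inside the type nat \<times> 'a, which is large enough (at most |\<coprod>_n V n| generators are ever
needed).\<close>
definition set_generated_le ::
  "(nat \<Rightarrow> 'g monoid) \<Rightarrow> (nat \<Rightarrow> nat \<Rightarrow> 'g \<Rightarrow> 'g \<Rightarrow> 'g) \<Rightarrow>
   (nat \<Rightarrow> 'a set) \<Rightarrow> (nat \<Rightarrow> nat \<Rightarrow> 'g set \<Rightarrow> 'a \<Rightarrow> 'a) \<Rightarrow> nat \<Rightarrow> bool" where
  "set_generated_le G oplus V F d \<longleftrightarrow>
     (\<exists>(J :: (nat \<times> 'a) set) mj \<eta>. (\<forall>j\<in>J. mj j \<le> d) \<and> rep_nat G oplus J mj V F \<eta>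
        \<and> (\<forall>n. V n \<subseteq> \<eta> n ` rep_basis G oplus J mj n))"

text \<open>Image of the map (\<Sigma>V)_n = G_n \<times>_{G_{n-1}} V_{n-1} \<rightarrow> V_n, [g,x] \<mapsto> g \<cdot> V(id_{n-1} \<oplus> \<iota>_1)(x).\<close>
definition set_sigma_image ::
  "(nat \<Rightarrow> 'g monoid) \<Rightarrow> (nat \<Rightarrow> nat \<Rightarrow> 'g \<Rightarrow> 'g \<Rightarrow> 'g) \<Rightarrow> (nat \<Rightarrow> nat \<Rightarrow> 'g) \<Rightarrow>
   (nat \<Rightarrow> 'a set) \<Rightarrow> (nat \<Rightarrow> nat \<Rightarrow> 'g set \<Rightarrow> 'a \<Rightarrow> 'a) \<Rightarrow> nat \<Rightarrow> 'a set" where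
  "set_sigma_image G oplus b V F n =
     {F n n (umor G oplus n n g) (F (n - 1) n (id_oplus_iota1 G oplus b n) x) | g x.
        g \<in> carrier (G n) \<and> x \<in> V (n - 1)}"

definition left_module :: "('r, 'z) ring_scheme \<Rightarrow> ('r, 'm) module \<Rightarrow> bool" where
  "left_module R M \<longleftrightarrow> ring R \<and> abelian_group M \<and> module_axioms R M"

definition linear_map :: "('r, 'z) ring_scheme \<Rightarrow> ('r, 'm) module \<Rightarrow> ('r, 'm) module \<Rightarrow> ('m \<Rightarrow> 'm) \<Rightarrow> bool" where
  "linear_map R M N h \<longleftrightarrow>
     (\<forall>x \<in> carrier M. h x \<in> carrier N)
   \<and> (\<forall>x \<in> carrier M. \<forall>y \<in> carrier M. h (x \<oplus>\<^bsub>M\<^esub> y) = h x \<oplus>\<^bsub>N\<^esub> h y)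
   \<and> (\<forall>a \<in> carrier R. \<forall>x \<in> carrier M. h (a \<odot>\<^bsub>M\<^esub> x) = a \<odot>\<^bsub>N\<^esub> h x)"

definition mod_functor ::
  "(nat \<Rightarrow> 'g monoid) \<Rightarrow> (nat \<Rightarrow> nat \<Rightarrow> 'g \<Rightarrow> 'g \<Rightarrow> 'g) \<Rightarrow> ('r, 'z) ring_scheme \<Rightarrow>
   (nat \<Rightarrow> ('r, 'm) module) \<Rightarrow> (nat \<Rightarrow> nat \<Rightarrow> 'g set \<Rightarrow> 'm \<Rightarrow> 'm) \<Rightarrow> bool" where
  "mod_functor G oplus R V F \<longleftrightarrow>
     (\<forall>n. left_module R (V n))
   \<and> (\<forall>k n C. C \<in> uhom G oplus k n \<longrightarrow> linear_map R (V k) (V n) (F k n C))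
   \<and> set_functor G oplus (\<lambda>n. carrier (V n)) F"

text \<open>Generated in ranks \<le> d: an epimorphism \<bigoplus>_{j \<in> J} R Hom(m_j,-) \<Rightarrow> V with m_j \<le> d.
Such a natural transformation is the R-linear extension of a natural map \<eta> on the basis
\<coprod>_j Hom(m_j,-); it is an epimorphism iff in each rank the image of the linear extension,
i.e. the set of finite R-linear combinations of basis images, is all of V n.\<close>
definition mod_generated_le ::
  "(nat \<Rightarrow> 'g monoid) \<Rightarrow> (nat \<Rightarrow> nat \<Rightarrow> 'g \<Rightarrow> 'g \<Rightarrow> 'g) \<Rightarrow> ('r, 'z) ring_scheme \<Rightarrow>
   (nat \<Rightarrow> ('r, 'm) module) \<Rightarrow> (nat \<Rightarrow> nat \<Rightarrow> 'g set \<Rightarrow> 'm \<Rightarrow> 'm) \<Rightarrow> nat \<Rightarrow> bool" where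
  "mod_generated_le G oplus R V F d \<longleftrightarrow>
     (\<exists>(J :: (nat \<times> 'm) set) mj \<eta>. (\<forall>j\<in>J. mj j \<le> d)
        \<and> rep_nat G oplus J mj (\<lambda>n. carrier (V n)) F \<eta>
        \<and> (\<forall>n. carrier (V n) \<subseteq>
             {finsum (V n) (\<lambda>t. c t \<odot>\<^bsub>V n\<^esub> \<eta> n t) T | T c.
                finite T \<and> T \<subseteq> rep_basis G oplus J mj n \<and> c \<in> T \<rightarrow> carrier R}))"

text \<open>Image of the map (\<Sigma>V)_n = RG_n \<otimes>_{RG_{n-1}} V_{n-1} \<rightarrow> V_n,
g \<otimes> x \<mapsto> g \<cdot> V(id_{n-1} \<oplus> \<iota>_1)(x): the finite sums of images of elementary tensors.\<close>
definition mod_sigma_image ::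
  "(nat \<Rightarrow> 'g monoid) \<Rightarrow> (nat \<Rightarrow> nat \<Rightarrow> 'g \<Rightarrow> 'g \<Rightarrow> 'g) \<Rightarrow> (nat \<Rightarrow> nat \<Rightarrow> 'g) \<Rightarrow>
   (nat \<Rightarrow> ('r, 'm) module) \<Rightarrow> (nat \<Rightarrow> nat \<Rightarrow> 'g set \<Rightarrow> 'm \<Rightarrow> 'm) \<Rightarrow> nat \<Rightarrow> 'm set" where
  "mod_sigma_image G oplus b V F n =
     {finsum (V n) (\<lambda>i. F n n (umor G oplus n n (g i)) (F (n - 1) n (id_oplus_iota1 G oplus b n) (x i))) {..<(k::nat)}
        | k g x. (\<forall>i<k. g i \<in> carrier (G n) \<and> x i \<in> carrier (V (n - 1)))}"

end

theory Submission
  imports Defs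
begin

text \<open>
Up to the action of G (n+1), the morphism id_n \<oplus> \<iota>_1 is just some morphism n \<rightarrow> n+1, and
all morphisms n \<rightarrow> n+1 form a single G (n+1)-orbit; so the image of (\<Sigma>V)_{n+1} \<rightarrow> V_{n+1}
consists of the elements (sums of elements, for modules) that come from V_n along a morphism.
A generator in rank m \<le> d reaches rank n+1 > d through rank n, which gives one direction.
Conversely, if everything above rank d comes from one rank lower, induction on n shows that
the elements F C x with x \<in> V_m, m \<le> d, exhaust (span) V_n, so the canonical map from
\<coprod>_{m \<le> d, x \<in> V_m} Hom(m, -) is an epimorphism.
\<close>

lemma stability_groupoid_facts:
  assumes "stability_groupoid G oplus"
  shows stability_group: "group (G n)"
    and stability_oplus_closed:
      "g \<in> carrier (G m) \<Longrightarrow> h \<in> carrier (G n) \<Longrightarrow> oplus m n g h \<in> carrier (G (m + n))"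
    and stability_oplus_one: "oplus m n \<one>\<^bsub>G m\<^esub> \<one>\<^bsub>G n\<^esub> = \<one>\<^bsub>G (m + n)\<^esub>"
    and stability_oplus_one_left: "h \<in> carrier (G n) \<Longrightarrow> oplus 0 n \<one>\<^bsub>G 0\<^esub> h = h"
  using assms unfolding stability_groupoid_def by auto

lemma stability_one_closed: "stability_groupoid G oplus \<Longrightarrow> \<one>\<^bsub>G n\<^esub> \<in> carrier (G n)"
  by (rule monoid.one_closed[OF group.is_monoid[OF stability_group]])

lemma braided_imp_stability_groupoid:
  "braided_stability_groupoid G oplus b \<Longrightarrow> stability_groupoid G oplus"
  unfolding braided_stability_groupoid_def by simp

lemma umor_in_uhom: "k \<le> n \<Longrightarrow> g \<in> carrier (G n) \<Longrightarrow> umor G oplus k n g \<in> uhom G oplus k n"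
  unfolding uhom_def by auto

lemma uhomE:
  assumes "C \<in> uhom G oplus k n"
  obtains g where "k \<le> n" "g \<in> carrier (G n)" "C = umor G oplus k n g"
  using assms unfolding uhom_def by (auto split: if_splits)

lemma id_oplus_iota1_eq_umor:
  assumes "braided_stability_groupoid G oplus b"
  obtains c where "c \<in> carrier (G (Suc n))"
    and "id_oplus_iota1 G oplus b (Suc n) = umor G oplus n (Suc n) c"
proof -
  have S: "stability_groupoid G oplus" and "b n 1 \<in> carrier (G (n + 1))"
    using assms unfolding braided_stability_groupoid_def by blast+
  then have b: "b n 1 \<in> carrier (G (Suc n))" by simp
  note closed = stability_oplus_closed[OF S] and one = stability_one_closed[OF S]
  define c where "c = oplus n 1 \<one>\<^bsub>G n\<^esub> \<one>\<^bsub>G 1\<^esub> \<otimes>\<^bsub>G (Suc n)\<^esub>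
    oplus 0 (Suc n) \<one>\<^bsub>G 0\<^esub> (oplus (Suc n) 0 (inv\<^bsub>G (Suc n)\<^esub> (b n 1)) \<one>\<^bsub>G 0\<^esub>)"
  have "inv\<^bsub>G (Suc n)\<^esub> (b n 1) \<in> carrier (G (Suc n))"
    using b by (simp add: group.inv_closed[OF stability_group[OF S]])
  then have "c \<in> carrier (G (Suc n))"
    unfolding c_def using closed[of _ n _ 1] closed[of _ 0 _ "Suc n"] closed[of _ "Suc n" _ 0] one
    by (simp add: monoid.m_closed[OF group.is_monoid[OF stability_group[OF S]]])
  moreover have "id_oplus_iota1 G oplus b (Suc n) = umor G oplus n (Suc n) c"
    unfolding id_oplus_iota1_def uoplus_def c_def by simp
  ultimately show thesis by (rule that)
qed

subsection \<open>The image of \<Sigma>V\<close>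

lemma set_functor_facts:
  assumes "set_functor G oplus V F"
  shows set_functor_closed: "C \<in> uhom G oplus k n \<Longrightarrow> x \<in> V k \<Longrightarrow> F k n C x \<in> V n"
    and set_functor_id: "x \<in> V n \<Longrightarrow> F n n (umor G oplus n n \<one>\<^bsub>G n\<^esub>) x = x"
    and set_functor_comp: "k \<le> n \<Longrightarrow> n \<le> p \<Longrightarrow> f \<in> carrier (G p) \<Longrightarrow> g \<in> carrier (G n) \<Longrightarrow>
        x \<in> V k \<Longrightarrow> F n p (umor G oplus n p f) (F k n (umor G oplus k n g) x)
          = F k p (umor G oplus k p (f \<otimes>\<^bsub>G p\<^esub> oplus (p - n) n \<one>\<^bsub>G (p - n)\<^esub> g)) x"
  using assms unfolding set_functor_def by blast+

lemma set_functor_act_umor: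
  assumes S: "stability_groupoid G oplus" and V: "set_functor G oplus V F"
    and "k \<le> n" "g \<in> carrier (G n)" "c \<in> carrier (G n)" "x \<in> V k"
  shows "F n n (umor G oplus n n g) (F k n (umor G oplus k n c) x)
       = F k n (umor G oplus k n (g \<otimes>\<^bsub>G n\<^esub> c)) x"
  using set_functor_comp[OF V, of k n n g c x] stability_oplus_one_left[OF S] assms by simp

definition one_step_image ::
  "(nat \<Rightarrow> 'g monoid) \<Rightarrow> (nat \<Rightarrow> nat \<Rightarrow> 'g \<Rightarrow> 'g \<Rightarrow> 'g) \<Rightarrow>
   (nat \<Rightarrow> 'a set) \<Rightarrow> (nat \<Rightarrow> nat \<Rightarrow> 'g set \<Rightarrow> 'a \<Rightarrow> 'a) \<Rightarrow> nat \<Rightarrow> 'a set" where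
  "one_step_image G oplus V F n =
     {F n (Suc n) (umor G oplus n (Suc n) g) x | g x. g \<in> carrier (G (Suc n)) \<and> x \<in> V n}"

lemma one_step_image_subset:
  assumes V: "set_functor G oplus V F"
  shows "one_step_image G oplus V F n \<subseteq> V (Suc n)"
  unfolding one_step_image_def by (auto intro!: set_functor_closed[OF V] umor_in_uhom)

lemma set_sigma_image_Suc:
  assumes B: "braided_stability_groupoid G oplus b" and V: "set_functor G oplus V F"
  shows "set_sigma_image G oplus b V F (Suc n) = one_step_image G oplus V F n"
proof -
  have S: "stability_groupoid G oplus" using B by (rule braided_imp_stability_groupoid)
  interpret G: group "G (Suc n)" by (rule stability_group[OF S])
  obtain c where c: "c \<in> carrier (G (Suc n))"
    and iota: "id_oplus_iota1 G oplus b (Suc n) = umor G oplus n (Suc n) c"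
    using id_oplus_iota1_eq_umor[OF B] .
  have act: "F (Suc n) (Suc n) (umor G oplus (Suc n) (Suc n) g) (F n (Suc n) (id_oplus_iota1 G oplus b (Suc n)) x)
      = F n (Suc n) (umor G oplus n (Suc n) (g \<otimes>\<^bsub>G (Suc n)\<^esub> c)) x"
    if "g \<in> carrier (G (Suc n))" "x \<in> V n" for g x
    unfolding iota using set_functor_act_umor[OF S V _ that(1) c that(2)] by simp
  show ?thesis
  proof
    show "set_sigma_image G oplus b V F (Suc n) \<subseteq> one_step_image G oplus V F n"
      unfolding set_sigma_image_def one_step_image_def using act c by fastforce
  next
    have "F n (Suc n) (umor G oplus n (Suc n) g) x \<in> set_sigma_image G oplus b V F (Suc n)"
      if g: "g \<in> carrier (G (Suc n))" and x: "x \<in> V n" for g x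
    proof -
      have g': "g \<otimes>\<^bsub>G (Suc n)\<^esub> inv\<^bsub>G (Suc n)\<^esub> c \<in> carrier (G (Suc n))"
        using g c by simp
      have "g = (g \<otimes>\<^bsub>G (Suc n)\<^esub> inv\<^bsub>G (Suc n)\<^esub> c) \<otimes>\<^bsub>G (Suc n)\<^esub> c"
        using g c by (simp add: G.m_assoc)
      then have "F n (Suc n) (umor G oplus n (Suc n) g) x
          = F (Suc n) (Suc n) (umor G oplus (Suc n) (Suc n) (g \<otimes>\<^bsub>G (Suc n)\<^esub> inv\<^bsub>G (Suc n)\<^esub> c))
              (F n (Suc n) (id_oplus_iota1 G oplus b (Suc n)) x)"
        using act[OF g' x] by simp
      then show ?thesis
        unfolding set_sigma_image_def using g' x by auto
    qed
    then show "one_step_image G oplus V F n \<subseteq> set_sigma_image G oplus b V F (Suc n)"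
      unfolding one_step_image_def by blast
  qed
qed

lemma rep_nat_facts:
  assumes "rep_nat G oplus J mj V F \<eta>"
  shows rep_nat_closed: "j \<in> J \<Longrightarrow> C \<in> uhom G oplus (mj j) n \<Longrightarrow> \<eta> n (j, C) \<in> V n"
    and rep_nat_natural: "j \<in> J \<Longrightarrow> mj j \<le> n \<Longrightarrow> n \<le> p \<Longrightarrow> f \<in> carrier (G p) \<Longrightarrow>
        g \<in> carrier (G n) \<Longrightarrow>
        \<eta> p (j, umor G oplus (mj j) p (f \<otimes>\<^bsub>G p\<^esub> oplus (p - n) n \<one>\<^bsub>G (p - n)\<^esub> g))
          = F n p (umor G oplus n p f) (\<eta> n (j, umor G oplus (mj j) n g))"
  using assms unfolding rep_nat_def rep_basis_def by blast+

lemma rep_nat_factor_Suc: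
  assumes S: "stability_groupoid G oplus" and \<eta>: "rep_nat G oplus J mj V F \<eta>"
    and "j \<in> J" "mj j \<le> n" "g \<in> carrier (G (Suc n))"
  shows "\<eta> (Suc n) (j, umor G oplus (mj j) (Suc n) g)
      = F n (Suc n) (umor G oplus n (Suc n) g) (\<eta> n (j, umor G oplus (mj j) n \<one>\<^bsub>G n\<^esub>))"
proof -
  interpret G: group "G (Suc n)" by (rule stability_group[OF S])
  have "oplus (Suc n - n) n \<one>\<^bsub>G (Suc n - n)\<^esub> \<one>\<^bsub>G n\<^esub> = \<one>\<^bsub>G (Suc n)\<^esub>"
    using stability_oplus_one[OF S, of "Suc n - n" n] by simp
  then show ?thesis
    using rep_nat_natural[OF \<eta> _ _ _ _ stability_one_closed[OF S], of j n "Suc n" g] assms by simp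
qed

text \<open>The generator (m, x) stands for the copy of Hom(m, -) mapped to V by C \<mapsto> F C x (Yoneda).\<close>
definition canon_gens :: "(nat \<Rightarrow> 'a set) \<Rightarrow> nat \<Rightarrow> (nat \<times> 'a) set" where
  "canon_gens V d = {(m, x). m \<le> d \<and> x \<in> V m}"

definition canon_eval :: "(nat \<Rightarrow> nat \<Rightarrow> 'g set \<Rightarrow> 'a \<Rightarrow> 'a) \<Rightarrow> nat \<Rightarrow> (nat \<times> 'a) \<times> 'g set \<Rightarrow> 'a" where
  "canon_eval F n t = F (fst (fst t)) n (snd t) (snd (fst t))"

lemma mem_rep_basis_canon_gens [simp]:
  "((m, x), C) \<in> rep_basis G oplus (canon_gens V d) fst n \<longleftrightarrow>
     m \<le> d \<and> x \<in> V m \<and> C \<in> uhom G oplus m n"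
  unfolding rep_basis_def canon_gens_def by auto

lemma canon_eval_closed:
  assumes V: "set_functor G oplus V F"
  shows "canon_eval F n ` rep_basis G oplus (canon_gens V d) fst n \<subseteq> V n"
  using set_functor_closed[OF V] by (force simp: canon_eval_def)

lemma rep_nat_canon:
  assumes V: "set_functor G oplus V F"
  shows "rep_nat G oplus (canon_gens V d) fst V F (canon_eval F)"
  unfolding rep_nat_def
proof (intro conjI allI impI)
  show "canon_eval F n ` rep_basis G oplus (canon_gens V d) fst n \<subseteq> V n" for n
    by (rule canon_eval_closed[OF V])
  show "canon_eval F p (j, umor G oplus (fst j) p (f \<otimes>\<^bsub>G p\<^esub> oplus (p - n) n \<one>\<^bsub>G (p - n)\<^esub> g))
      = F n p (umor G oplus n p f) (canon_eval F n (j, umor G oplus (fst j) n g))"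
    if "j \<in> canon_gens V d" "fst j \<le> n" "n \<le> p" "f \<in> carrier (G p)" "g \<in> carrier (G n)" for j n p f g
    using that set_functor_comp[OF V] by (auto simp: canon_eval_def canon_gens_def)
qed

lemma canon_eval_self:
  assumes S: "stability_groupoid G oplus" and V: "set_functor G oplus V F"
    and "n \<le> d" "x \<in> V n"
  shows "x \<in> canon_eval F n ` rep_basis G oplus (canon_gens V d) fst n"
proof
  show "x = canon_eval F n ((n, x), umor G oplus n n \<one>\<^bsub>G n\<^esub>)"
    using set_functor_id[OF V] assms by (simp add: canon_eval_def)
  show "((n, x), umor G oplus n n \<one>\<^bsub>G n\<^esub>) \<in> rep_basis G oplus (canon_gens V d) fst n"
    using assms stability_one_closed[OF S] by (simp add: umor_in_uhom)
qed

lemma canon_eval_morphism: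
  assumes S: "stability_groupoid G oplus" and V: "set_functor G oplus V F"
    and kn: "k \<le> n" and g: "g \<in> carrier (G n)"
    and t: "t \<in> rep_basis G oplus (canon_gens V d) fst k"
  obtains t' where "t' \<in> rep_basis G oplus (canon_gens V d) fst n"
    and "F k n (umor G oplus k n g) (canon_eval F k t) = canon_eval F n t'"
proof -
  obtain m x C where tC: "t = ((m, x), C)" by (metis prod.collapse)
  with t have m: "m \<le> d" and x: "x \<in> V m" and C: "C \<in> uhom G oplus m k" by auto
  from C obtain h where mk: "m \<le> k" and h: "h \<in> carrier (G k)" and Ch: "C = umor G oplus m k h"
    by (rule uhomE)
  define g' where "g' = g \<otimes>\<^bsub>G n\<^esub> oplus (n - k) k \<one>\<^bsub>G (n - k)\<^esub> h"
  have "oplus (n - k) k \<one>\<^bsub>G (n - k)\<^esub> h \<in> carrier (G n)"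
    using stability_oplus_closed[OF S stability_one_closed[OF S] h, of "n - k"] kn by simp
  then have g': "g' \<in> carrier (G n)"
    unfolding g'_def using g by (simp add: monoid.m_closed[OF group.is_monoid[OF stability_group[OF S]]])
  have "((m, x), umor G oplus m n g') \<in> rep_basis G oplus (canon_gens V d) fst n"
    using m x mk kn g' by (simp add: umor_in_uhom)
  moreover have "F k n (umor G oplus k n g) (canon_eval F k t) = canon_eval F n ((m, x), umor G oplus m n g')"
    unfolding tC Ch canon_eval_def g'_def fst_conv snd_conv by (rule set_functor_comp[OF V mk kn g h x])
  ultimately show thesis by (rule that)
qed

subsection \<open>Functors to sets\<close>

lemma set_generated_le_imp_one_step:
  fixes V :: "nat \<Rightarrow> 'a set"
  assumes S: "stability_groupoid G oplus" and gen: "set_generated_le G oplus V F d"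
    and "d \<le> n"
  shows "V (Suc n) \<subseteq> one_step_image G oplus V F n"
proof
  fix v assume v: "v \<in> V (Suc n)"
  obtain J :: "(nat \<times> 'a) set" and mj \<eta> where mj: "\<forall>j\<in>J. mj j \<le> d"
    and \<eta>: "rep_nat G oplus J mj V F \<eta>" and onto: "\<forall>n. V n \<subseteq> \<eta> n ` rep_basis G oplus J mj n"
    using gen unfolding set_generated_le_def by blast
  from onto v obtain t where t: "t \<in> rep_basis G oplus J mj (Suc n)" and vt: "v = \<eta> (Suc n) t"
    by blast
  obtain j C where tC: "t = (j, C)" by (rule prod.exhaust)
  with t have j: "j \<in> J" and C: "C \<in> uhom G oplus (mj j) (Suc n)" unfolding rep_basis_def by auto
  from C obtain g where g: "g \<in> carrier (G (Suc n))" and Cg: "C = umor G oplus (mj j) (Suc n) g"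
    by (rule uhomE)
  have jn: "mj j \<le> n" using mj j \<open>d \<le> n\<close> by fastforce
  have "\<eta> n (j, umor G oplus (mj j) n \<one>\<^bsub>G n\<^esub>) \<in> V n"
    using rep_nat_closed[OF \<eta> j] jn stability_one_closed[OF S] by (simp add: umor_in_uhom)
  then show "v \<in> one_step_image G oplus V F n"
    unfolding vt tC Cg rep_nat_factor_Suc[OF S \<eta> j jn g] one_step_image_def using g by blast
qed

lemma set_span_canon_gens:
  fixes V :: "nat \<Rightarrow> 'a set"
  assumes S: "stability_groupoid G oplus" and V: "set_functor G oplus V F"
    and step: "\<forall>n\<ge>d. V (Suc n) \<subseteq> one_step_image G oplus V F n"
  shows "V n \<subseteq> canon_eval F n ` rep_basis G oplus (canon_gens V d) fst n"
proof (induction n)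
  case 0
  show ?case using canon_eval_self[OF S V, of 0] by blast
next
  case (Suc n)
  show ?case
  proof
    fix v assume v: "v \<in> V (Suc n)"
    show "v \<in> canon_eval F (Suc n) ` rep_basis G oplus (canon_gens V d) fst (Suc n)"
    proof (cases "Suc n \<le> d")
      case True
      then show ?thesis using canon_eval_self[OF S V _ v] by blast
    next
      case False
      then have "d \<le> n" by simp
      then have "v \<in> one_step_image G oplus V F n" using step v by blast
      then obtain g x where g: "g \<in> carrier (G (Suc n))" and x: "x \<in> V n"
        and vx: "v = F n (Suc n) (umor G oplus n (Suc n) g) x"
        unfolding one_step_image_def by blast
      from x Suc.IH obtain t where t: "t \<in> rep_basis G oplus (canon_gens V d) fst n"
        and xt: "x = canon_eval F n t" by blast
      obtain t' where "t' \<in> rep_basis G oplus (canon_gens V d) fst (Suc n)"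
        and "F n (Suc n) (umor G oplus n (Suc n) g) (canon_eval F n t) = canon_eval F (Suc n) t'"
        using canon_eval_morphism[OF S V _ g t] by auto
      then show ?thesis unfolding vx xt by blast
    qed
  qed
qed

lemma set_generated_le_iff_one_step:
  fixes V :: "nat \<Rightarrow> 'a set"
  assumes S: "stability_groupoid G oplus" and V: "set_functor G oplus V F"
  shows "set_generated_le G oplus V F d \<longleftrightarrow> (\<forall>n\<ge>d. V (Suc n) \<subseteq> one_step_image G oplus V F n)"
proof
  show "set_generated_le G oplus V F d \<Longrightarrow> \<forall>n\<ge>d. V (Suc n) \<subseteq> one_step_image G oplus V F n"
    using set_generated_le_imp_one_step[OF S] by blast
  show "set_generated_le G oplus V F d" if "\<forall>n\<ge>d. V (Suc n) \<subseteq> one_step_image G oplus V F n"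
    unfolding set_generated_le_def
    using rep_nat_canon[OF V, of d] set_span_canon_gens[OF S V that]
    by (intro exI[of _ "canon_gens V d"] exI[of _ fst] exI[of _ "canon_eval F"] conjI)
       (simp_all add: canon_gens_def)
qed

subsection \<open>Linear combinations in left modules\<close>

lemma left_module_facts:
  assumes "left_module R M"
  shows left_module_ring: "ring R"
    and left_module_abelian_group: "abelian_group M"
    and smult_closed: "a \<in> carrier R \<Longrightarrow> x \<in> carrier M \<Longrightarrow> a \<odot>\<^bsub>M\<^esub> x \<in> carrier M"
    and smult_l_distr: "a \<in> carrier R \<Longrightarrow> a' \<in> carrier R \<Longrightarrow> x \<in> carrier M \<Longrightarrow>
        (a \<oplus>\<^bsub>R\<^esub> a') \<odot>\<^bsub>M\<^esub> x = a \<odot>\<^bsub>M\<^esub> x \<oplus>\<^bsub>M\<^esub> a' \<odot>\<^bsub>M\<^esub> x"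
    and smult_one: "x \<in> carrier M \<Longrightarrow> \<one>\<^bsub>R\<^esub> \<odot>\<^bsub>M\<^esub> x = x"
  using assms unfolding left_module_def module_axioms_def by auto

lemma smult_l_null:
  assumes M: "left_module R M" and x: "x \<in> carrier M"
  shows "\<zero>\<^bsub>R\<^esub> \<odot>\<^bsub>M\<^esub> x = \<zero>\<^bsub>M\<^esub>"
proof -
  interpret R: ring R by (rule left_module_ring[OF M])
  interpret M: abelian_group M by (rule left_module_abelian_group[OF M])
  have c: "\<zero>\<^bsub>R\<^esub> \<odot>\<^bsub>M\<^esub> x \<in> carrier M" using smult_closed[OF M _ x] by simp
  have "\<zero>\<^bsub>R\<^esub> \<odot>\<^bsub>M\<^esub> x \<oplus>\<^bsub>M\<^esub> \<zero>\<^bsub>R\<^esub> \<odot>\<^bsub>M\<^esub> x = \<zero>\<^bsub>R\<^esub> \<odot>\<^bsub>M\<^esub> x \<oplus>\<^bsub>M\<^esub> \<zero>\<^bsub>M\<^esub>"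
    using smult_l_distr[OF M, of "\<zero>\<^bsub>R\<^esub>" "\<zero>\<^bsub>R\<^esub>" x] x c by simp
  then show ?thesis using c M.add.l_cancel_one[of "\<zero>\<^bsub>R\<^esub> \<odot>\<^bsub>M\<^esub> x"] by simp
qed

lemma linear_map_facts:
  assumes "linear_map R M N h"
  shows linear_map_closed: "x \<in> carrier M \<Longrightarrow> h x \<in> carrier N"
    and linear_map_add: "x \<in> carrier M \<Longrightarrow> y \<in> carrier M \<Longrightarrow> h (x \<oplus>\<^bsub>M\<^esub> y) = h x \<oplus>\<^bsub>N\<^esub> h y"
    and linear_map_smult: "a \<in> carrier R \<Longrightarrow> x \<in> carrier M \<Longrightarrow> h (a \<odot>\<^bsub>M\<^esub> x) = a \<odot>\<^bsub>N\<^esub> h x"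
  using assms unfolding linear_map_def by auto

lemma linear_map_zero:
  assumes M: "left_module R M" and N: "left_module R N" and h: "linear_map R M N h"
  shows "h \<zero>\<^bsub>M\<^esub> = \<zero>\<^bsub>N\<^esub>"
proof -
  interpret M: abelian_group M by (rule left_module_abelian_group[OF M])
  interpret N: abelian_group N by (rule left_module_abelian_group[OF N])
  have "h \<zero>\<^bsub>M\<^esub> \<oplus>\<^bsub>N\<^esub> h \<zero>\<^bsub>M\<^esub> = h \<zero>\<^bsub>M\<^esub>"
    using linear_map_add[OF h M.zero_closed M.zero_closed] by simp
  then show ?thesis
    using N.add.l_cancel_one[OF linear_map_closed[OF h M.zero_closed]] linear_map_closed[OF h] by simp
qed

lemma linear_map_finsum:
  assumes M: "left_module R M" and N: "left_module R N" and h: "linear_map R M N h"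
    and "finite T" and "f \<in> T \<rightarrow> carrier M"
  shows "h (finsum M f T) = finsum N (\<lambda>t. h (f t)) T"
  using assms(4,5)
proof (induction T rule: finite_induct)
  case empty
  interpret M: abelian_group M by (rule left_module_abelian_group[OF M])
  interpret N: abelian_group N by (rule left_module_abelian_group[OF N])
  show ?case using linear_map_zero[OF M N h] by simp
next
  case (insert t T)
  interpret M: abelian_group M by (rule left_module_abelian_group[OF M])
  interpret N: abelian_group N by (rule left_module_abelian_group[OF N])
  have ft: "f t \<in> carrier M" and fT: "f \<in> T \<rightarrow> carrier M" using insert by auto
  have hfT: "(\<lambda>t. h (f t)) \<in> T \<rightarrow> carrier N" using fT linear_map_closed[OF h] by auto
  have "h (finsum M f (insert t T)) = h (f t \<oplus>\<^bsub>M\<^esub> finsum M f T)"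
    using M.finsum_insert[OF insert(1,2) fT ft] by simp
  also have "\<dots> = h (f t) \<oplus>\<^bsub>N\<^esub> finsum N (\<lambda>t. h (f t)) T"
    using linear_map_add[OF h ft M.finsum_closed[OF fT]] insert.IH[OF fT] by simp
  also have "\<dots> = finsum N (\<lambda>t. h (f t)) (insert t T)"
    using N.finsum_insert[OF insert(1,2) hfT] linear_map_closed[OF h ft] by simp
  finally show ?case .
qed

definition lcomb :: "('r, 'z) ring_scheme \<Rightarrow> ('r, 'm) module \<Rightarrow> ('t \<Rightarrow> 'm) \<Rightarrow> 't set \<Rightarrow> 'm set" where
  "lcomb R M f B = {finsum M (\<lambda>t. c t \<odot>\<^bsub>M\<^esub> f t) T | T c. finite T \<and> T \<subseteq> B \<and> c \<in> T \<rightarrow> carrier R}"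

lemma lcomb_closed:
  assumes M: "left_module R M" and f: "f ` B \<subseteq> carrier M"
  shows "lcomb R M f B \<subseteq> carrier M"
proof
  interpret M: abelian_group M by (rule left_module_abelian_group[OF M])
  fix z assume "z \<in> lcomb R M f B"
  then obtain T c where z: "z = finsum M (\<lambda>t. c t \<odot>\<^bsub>M\<^esub> f t) T" and "T \<subseteq> B" "c \<in> T \<rightarrow> carrier R"
    unfolding lcomb_def by blast
  then have "(\<lambda>t. c t \<odot>\<^bsub>M\<^esub> f t) \<in> T \<rightarrow> carrier M"
    using f smult_closed[OF M] by blast
  then show "z \<in> carrier M" unfolding z by (rule M.finsum_closed)
qed

lemma lcomb_zero:
  assumes M: "left_module R M"
  shows "\<zero>\<^bsub>M\<^esub> \<in> lcomb R M f B"
proof -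
  interpret M: abelian_group M by (rule left_module_abelian_group[OF M])
  show ?thesis unfolding lcomb_def
    by (intro CollectI exI[of _ "{}"] exI[of _ "\<lambda>_. \<zero>\<^bsub>R\<^esub>"]) simp
qed

lemma lcomb_single:
  assumes M: "left_module R M" and f: "f ` B \<subseteq> carrier M" and t: "t \<in> B" and a: "a \<in> carrier R"
  shows "a \<odot>\<^bsub>M\<^esub> f t \<in> lcomb R M f B"
proof -
  interpret M: abelian_group M by (rule left_module_abelian_group[OF M])
  have "a \<odot>\<^bsub>M\<^esub> f t \<in> carrier M" using smult_closed[OF M a] f t by auto
  then have "finsum M (\<lambda>s. a \<odot>\<^bsub>M\<^esub> f s) {t} = a \<odot>\<^bsub>M\<^esub> f t" by simp
  then show ?thesis
    unfolding lcomb_def using t a by (intro CollectI exI[of _ "{t}"] exI[of _ "\<lambda>_. a"]) auto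
qed

lemma lcomb_generator:
  assumes M: "left_module R M" and f: "f ` B \<subseteq> carrier M" and t: "t \<in> B"
  shows "f t \<in> lcomb R M f B"
proof -
  interpret R: ring R by (rule left_module_ring[OF M])
  show ?thesis using lcomb_single[OF M f t R.one_closed] smult_one[OF M] f t by auto
qed

lemma finsum_smult_extend_zero:
  assumes M: "left_module R M" and "finite T'" "T \<subseteq> T'" and f: "f ` T' \<subseteq> carrier M"
    and c: "c \<in> T \<rightarrow> carrier R"
  shows "finsum M (\<lambda>t. c t \<odot>\<^bsub>M\<^esub> f t) T
       = finsum M (\<lambda>t. (if t \<in> T then c t else \<zero>\<^bsub>R\<^esub>) \<odot>\<^bsub>M\<^esub> f t) T'"
proof -
  interpret R: ring R by (rule left_module_ring[OF M])
  interpret M: abelian_group M by (rule left_module_abelian_group[OF M])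
  show ?thesis
  proof (rule M.add.finprod_mono_neutral_cong_left)
    show "(\<lambda>t. (if t \<in> T then c t else \<zero>\<^bsub>R\<^esub>) \<odot>\<^bsub>M\<^esub> f t) \<in> T' \<rightarrow> carrier M"
      using c f by (auto intro!: smult_closed[OF M])
    show "(if t \<in> T then c t else \<zero>\<^bsub>R\<^esub>) \<odot>\<^bsub>M\<^esub> f t = \<zero>\<^bsub>M\<^esub>" if "t \<in> T' - T" for t
      using that f smult_l_null[OF M] by auto
  qed (use assms in auto)
qed

lemma lcomb_add:
  assumes M: "left_module R M" and f: "f ` B \<subseteq> carrier M"
    and x: "x \<in> lcomb R M f B" and y: "y \<in> lcomb R M f B"
  shows "x \<oplus>\<^bsub>M\<^esub> y \<in> lcomb R M f B"
proof -
  interpret R: ring R by (rule left_module_ring[OF M])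
  interpret M: abelian_group M by (rule left_module_abelian_group[OF M])
  obtain T1 c1 where x1: "x = finsum M (\<lambda>t. c1 t \<odot>\<^bsub>M\<^esub> f t) T1" and T1: "finite T1" "T1 \<subseteq> B"
    and c1: "c1 \<in> T1 \<rightarrow> carrier R"
    using x unfolding lcomb_def by blast
  obtain T2 c2 where y2: "y = finsum M (\<lambda>t. c2 t \<odot>\<^bsub>M\<^esub> f t) T2" and T2: "finite T2" "T2 \<subseteq> B"
    and c2: "c2 \<in> T2 \<rightarrow> carrier R"
    using y unfolding lcomb_def by blast
  define d1 where "d1 t = (if t \<in> T1 then c1 t else \<zero>\<^bsub>R\<^esub>)" for t
  define d2 where "d2 t = (if t \<in> T2 then c2 t else \<zero>\<^bsub>R\<^esub>)" for t
  have d1: "d1 t \<in> carrier R" and d2: "d2 t \<in> carrier R" for t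
    using c1 c2 unfolding d1_def d2_def by auto
  have fin: "finite (T1 \<union> T2)" and fT: "f ` (T1 \<union> T2) \<subseteq> carrier M" using T1 T2 f by auto
  have "x \<oplus>\<^bsub>M\<^esub> y
      = finsum M (\<lambda>t. d1 t \<odot>\<^bsub>M\<^esub> f t) (T1 \<union> T2) \<oplus>\<^bsub>M\<^esub> finsum M (\<lambda>t. d2 t \<odot>\<^bsub>M\<^esub> f t) (T1 \<union> T2)"
    unfolding x1 y2 d1_def d2_def
    using finsum_smult_extend_zero[OF M fin _ fT c1] finsum_smult_extend_zero[OF M fin _ fT c2] by simp
  also have "\<dots> = finsum M (\<lambda>t. d1 t \<odot>\<^bsub>M\<^esub> f t \<oplus>\<^bsub>M\<^esub> d2 t \<odot>\<^bsub>M\<^esub> f t) (T1 \<union> T2)"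
    using fT d1 d2 by (intro M.finsum_addf[symmetric]) (auto intro!: smult_closed[OF M])
  also have "\<dots> = finsum M (\<lambda>t. (d1 t \<oplus>\<^bsub>R\<^esub> d2 t) \<odot>\<^bsub>M\<^esub> f t) (T1 \<union> T2)"
    using fT d1 d2 by (intro M.finsum_cong') (auto simp: smult_l_distr[OF M] intro!: smult_closed[OF M])
  finally have sum: "x \<oplus>\<^bsub>M\<^esub> y = finsum M (\<lambda>t. (d1 t \<oplus>\<^bsub>R\<^esub> d2 t) \<odot>\<^bsub>M\<^esub> f t) (T1 \<union> T2)" .
  have "(\<lambda>t. d1 t \<oplus>\<^bsub>R\<^esub> d2 t) \<in> T1 \<union> T2 \<rightarrow> carrier R" using d1 d2 by simp
  then show ?thesis unfolding lcomb_def
    by (intro CollectI exI[of _ "T1 \<union> T2"] exI[of _ "\<lambda>t. d1 t \<oplus>\<^bsub>R\<^esub> d2 t"] conjI sum fin)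
       (use T1 T2 in auto)
qed

lemma lcomb_finsum:
  assumes M: "left_module R M" and f: "f ` B \<subseteq> carrier M"
    and "finite I" and "\<And>i. i \<in> I \<Longrightarrow> g i \<in> lcomb R M f B"
  shows "finsum M g I \<in> lcomb R M f B"
  using assms(3,4)
proof (induction I rule: finite_induct)
  case empty
  interpret M: abelian_group M by (rule left_module_abelian_group[OF M])
  show ?case using lcomb_zero[OF M] by simp
next
  case (insert i I)
  interpret M: abelian_group M by (rule left_module_abelian_group[OF M])
  have gi: "g i \<in> lcomb R M f B" and gI: "finsum M g I \<in> lcomb R M f B"
    using insert by simp_all
  have "g \<in> I \<rightarrow> carrier M" "g i \<in> carrier M"
    using insert.prems lcomb_closed[OF M f] by blast+
  then have "finsum M g (insert i I) = g i \<oplus>\<^bsub>M\<^esub> finsum M g I"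
    by (rule M.finsum_insert[OF insert.hyps])
  then show ?case using lcomb_add[OF M f gi gI] by (simp only:)
qed

lemma lcomb_linear_image:
  assumes M: "left_module R M" and N: "left_module R N" and h: "linear_map R M N h"
    and f: "f ` B \<subseteq> carrier M" and f': "f' ` B' \<subseteq> carrier N"
    and maps: "\<And>t. t \<in> B \<Longrightarrow> \<exists>t'\<in>B'. h (f t) = f' t'"
    and x: "x \<in> lcomb R M f B"
  shows "h x \<in> lcomb R N f' B'"
proof -
  obtain T c where xT: "x = finsum M (\<lambda>t. c t \<odot>\<^bsub>M\<^esub> f t) T" and T: "finite T" "T \<subseteq> B"
    and c: "c \<in> T \<rightarrow> carrier R"
    using x unfolding lcomb_def by blast
  have "h x = finsum N (\<lambda>t. h (c t \<odot>\<^bsub>M\<^esub> f t)) T"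
    unfolding xT using f T c
    by (intro linear_map_finsum[OF M N h]) (auto intro!: smult_closed[OF M])
  also have "\<dots> \<in> lcomb R N f' B'"
  proof (rule lcomb_finsum[OF N f' \<open>finite T\<close>])
    fix t assume t: "t \<in> T"
    then obtain t' where t': "t' \<in> B'" "h (f t) = f' t'" using maps T by blast
    have "c t \<in> carrier R" "f t \<in> carrier M" using t c T f by auto
    then have "h (c t \<odot>\<^bsub>M\<^esub> f t) = c t \<odot>\<^bsub>N\<^esub> f' t'"
      using linear_map_smult[OF h] t'(2) by simp
    then show "h (c t \<odot>\<^bsub>M\<^esub> f t) \<in> lcomb R N f' B'"
      using lcomb_single[OF N f' t'(1)] t c by auto
  qed
  finally show ?thesis .
qed

lemma (in comm_monoid) finprod_eq_finprod_lessThan: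
  assumes "finite A" and "f \<in> A \<rightarrow> S" and "S \<subseteq> carrier G"
  obtains k :: nat and u where "\<forall>i<k. u i \<in> S" and "finprod G f A = finprod G u {..<k}"
proof -
  obtain k :: nat and h where "A = h ` {i. i < k}" and "inj_on h {i. i < k}"
    using finite_imp_nat_seg_image_inj_on[OF assms(1)] by blast
  then have A: "A = h ` {..<k}" and h: "inj_on h {..<k}" by (simp_all add: lessThan_def)
  have "\<forall>i<k. f (h i) \<in> S" using assms(2) A by auto
  moreover have "finprod G f A = finprod G (\<lambda>i. f (h i)) {..<k}"
    unfolding A by (rule finprod_reindex) (use assms(2,3) A h in auto)
  ultimately show thesis by (rule that)
qed

subsection \<open>Functors to modules\<close>

lemma mod_functor_facts:
  assumes "mod_functor G oplus R V F"
  shows mod_functor_module: "left_module R (V n)"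
    and mod_functor_linear: "C \<in> uhom G oplus k n \<Longrightarrow> linear_map R (V k) (V n) (F k n C)"
    and mod_functor_set_functor: "set_functor G oplus (\<lambda>n. carrier (V n)) F"
  using assms unfolding mod_functor_def by auto

definition finite_sums :: "('b, 'z) ring_scheme \<Rightarrow> 'b set \<Rightarrow> 'b set" where
  "finite_sums M S = {finsum M u {..<k} | (k :: nat) u. \<forall>i<k. u i \<in> S}"

lemma mod_sigma_image_Suc:
  assumes B: "braided_stability_groupoid G oplus b" and MF: "mod_functor G oplus R V F"
  shows "mod_sigma_image G oplus b V F (Suc n) =
    finite_sums (V (Suc n)) (one_step_image G oplus (\<lambda>n. carrier (V n)) F n)"
    (is "_ = ?sums")
proof -
  note W = mod_functor_set_functor[OF MF]
  interpret M: abelian_group "V (Suc n)"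
    by (rule left_module_abelian_group[OF mod_functor_module[OF MF]])
  let ?term = "\<lambda>g x. F (Suc n) (Suc n) (umor G oplus (Suc n) (Suc n) g)
      (F n (Suc n) (id_oplus_iota1 G oplus b (Suc n)) x)"
  have sigma: "{?term g x | g x. g \<in> carrier (G (Suc n)) \<and> x \<in> carrier (V n)}
      = one_step_image G oplus (\<lambda>n. carrier (V n)) F n"
    using set_sigma_image_Suc[OF B W] unfolding set_sigma_image_def by simp
  show ?thesis
  proof
    show "mod_sigma_image G oplus b V F (Suc n) \<subseteq> ?sums"
    proof
      fix v assume "v \<in> mod_sigma_image G oplus b V F (Suc n)"
      then obtain k :: nat and g x where gx: "\<forall>i<k. g i \<in> carrier (G (Suc n)) \<and> x i \<in> carrier (V n)"
        and v: "v = finsum (V (Suc n)) (\<lambda>i. ?term (g i) (x i)) {..<k}"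
        unfolding mod_sigma_image_def diff_Suc_1 by blast
      have "\<forall>i<k. ?term (g i) (x i) \<in> one_step_image G oplus (\<lambda>n. carrier (V n)) F n"
        unfolding sigma[symmetric] using gx by blast
      then show "v \<in> ?sums"
        unfolding v finite_sums_def by (intro CollectI exI[of _ k] exI[of _ "\<lambda>i. ?term (g i) (x i)"]) simp
    qed
  next
    show "?sums \<subseteq> mod_sigma_image G oplus b V F (Suc n)"
    proof
      fix v assume "v \<in> ?sums"
      then obtain k :: nat and u where u: "\<forall>i<k. u i \<in> one_step_image G oplus (\<lambda>n. carrier (V n)) F n"
        and v: "v = finsum (V (Suc n)) u {..<k}" unfolding finite_sums_def by blast
      then have "\<forall>i<k. \<exists>g x. g \<in> carrier (G (Suc n)) \<and> x \<in> carrier (V n) \<and> u i = ?term g x"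
        unfolding sigma[symmetric] by blast
      then obtain g x where gx: "\<forall>i<k. g i \<in> carrier (G (Suc n)) \<and> x i \<in> carrier (V n)
          \<and> u i = ?term (g i) (x i)" by metis
      have "u \<in> {..<k} \<rightarrow> carrier (V (Suc n))"
        using u one_step_image_subset[OF W] by blast
      then have "finsum (V (Suc n)) (\<lambda>i. ?term (g i) (x i)) {..<k} = v"
        unfolding v using gx by (intro M.finsum_cong') auto
      then show "v \<in> mod_sigma_image G oplus b V F (Suc n)"
        unfolding mod_sigma_image_def using gx by auto
    qed
  qed
qed

lemma mod_generated_le_imp_one_step_sums:
  fixes V :: "nat \<Rightarrow> ('r, 'm) module"
  assumes S: "stability_groupoid G oplus" and MF: "mod_functor G oplus R V F"
    and gen: "mod_generated_le G oplus R V F d" and "d \<le> n"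
  shows "carrier (V (Suc n)) \<subseteq> finite_sums (V (Suc n)) (one_step_image G oplus (\<lambda>n. carrier (V n)) F n)"
proof
  fix v assume v: "v \<in> carrier (V (Suc n))"
  note VSn = mod_functor_module[OF MF, of "Suc n"] and W = mod_functor_set_functor[OF MF]
  interpret M: abelian_group "V (Suc n)" by (rule left_module_abelian_group[OF VSn])
  obtain J :: "(nat \<times> 'm) set" and mj \<eta> where mj: "\<forall>j\<in>J. mj j \<le> d"
    and \<eta>: "rep_nat G oplus J mj (\<lambda>n. carrier (V n)) F \<eta>"
    and onto: "\<forall>n. carrier (V n) \<subseteq> {finsum (V n) (\<lambda>t. c t \<odot>\<^bsub>V n\<^esub> \<eta> n t) T | T c.
                finite T \<and> T \<subseteq> rep_basis G oplus J mj n \<and> c \<in> T \<rightarrow> carrier R}"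
    using gen unfolding mod_generated_le_def by blast
  from onto v obtain T c where vT: "v = finsum (V (Suc n)) (\<lambda>t. c t \<odot>\<^bsub>V (Suc n)\<^esub> \<eta> (Suc n) t) T"
    and T: "finite T" "T \<subseteq> rep_basis G oplus J mj (Suc n)" and c: "c \<in> T \<rightarrow> carrier R"
    by blast
  have "c t \<odot>\<^bsub>V (Suc n)\<^esub> \<eta> (Suc n) t \<in> one_step_image G oplus (\<lambda>n. carrier (V n)) F n"
    if t: "t \<in> T" for t
  proof -
    obtain j C where tC: "t = (j, C)" by (rule prod.exhaust)
    with t T have j: "j \<in> J" and C: "C \<in> uhom G oplus (mj j) (Suc n)" unfolding rep_basis_def by auto
    from C obtain g where g: "g \<in> carrier (G (Suc n))" and Cg: "C = umor G oplus (mj j) (Suc n) g"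
      by (rule uhomE)
    have jn: "mj j \<le> n" using mj j \<open>d \<le> n\<close> by fastforce
    have ct: "c t \<in> carrier R" using c t by blast
    define y where "y = \<eta> n (j, umor G oplus (mj j) n \<one>\<^bsub>G n\<^esub>)"
    have y: "y \<in> carrier (V n)"
      unfolding y_def using rep_nat_closed[OF \<eta> j] jn stability_one_closed[OF S] by (simp add: umor_in_uhom)
    have L: "linear_map R (V n) (V (Suc n)) (F n (Suc n) (umor G oplus n (Suc n) g))"
      using g by (simp add: mod_functor_linear[OF MF] umor_in_uhom)
    have "\<eta> (Suc n) t = F n (Suc n) (umor G oplus n (Suc n) g) y"
      unfolding tC Cg rep_nat_factor_Suc[OF S \<eta> j jn g] y_def ..
    then have "c t \<odot>\<^bsub>V (Suc n)\<^esub> \<eta> (Suc n) t = F n (Suc n) (umor G oplus n (Suc n) g) (c t \<odot>\<^bsub>V n\<^esub> y)"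
      using linear_map_smult[OF L ct y] by simp
    moreover have "c t \<odot>\<^bsub>V n\<^esub> y \<in> carrier (V n)"
      by (rule smult_closed[OF mod_functor_module[OF MF] ct y])
    ultimately show ?thesis unfolding one_step_image_def using g by blast
  qed
  then have "(\<lambda>t. c t \<odot>\<^bsub>V (Suc n)\<^esub> \<eta> (Suc n) t) \<in> T \<rightarrow> one_step_image G oplus (\<lambda>n. carrier (V n)) F n"
    by blast
  from M.add.finprod_eq_finprod_lessThan[OF T(1) this one_step_image_subset[OF W]]
  obtain k :: nat and u where "\<forall>i<k. u i \<in> one_step_image G oplus (\<lambda>n. carrier (V n)) F n"
    and "v = finsum (V (Suc n)) u {..<k}"
    unfolding vT .
  then show "v \<in> finite_sums (V (Suc n)) (one_step_image G oplus (\<lambda>n. carrier (V n)) F n)"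
    unfolding finite_sums_def by blast
qed

lemma mod_span_canon_gens:
  fixes V :: "nat \<Rightarrow> ('r, 'm) module"
  assumes S: "stability_groupoid G oplus" and MF: "mod_functor G oplus R V F"
    and step: "\<forall>n\<ge>d. carrier (V (Suc n))
      \<subseteq> finite_sums (V (Suc n)) (one_step_image G oplus (\<lambda>n. carrier (V n)) F n)"
  shows "carrier (V n) \<subseteq> lcomb R (V n) (canon_eval F n)
      (rep_basis G oplus (canon_gens (\<lambda>n. carrier (V n)) d) fst n)"
proof -
  let ?B = "\<lambda>n. rep_basis G oplus (canon_gens (\<lambda>n. carrier (V n)) d) fst n"
  note W = mod_functor_set_functor[OF MF] and VM = mod_functor_module[OF MF]
  have img: "canon_eval F n ` ?B n \<subseteq> carrier (V n)" for n
    by (rule canon_eval_closed[OF W])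
  have low: "carrier (V n) \<subseteq> lcomb R (V n) (canon_eval F n) (?B n)" if "n \<le> d" for n
    using canon_eval_self[OF S W that] lcomb_generator[OF VM img] by blast
  show ?thesis
  proof (induction n)
    case 0
    show ?case using low by simp
  next
    case (Suc n)
    show ?case
    proof (cases "Suc n \<le> d")
      case True
      then show ?thesis by (rule low)
    next
      case False
      have one_step: "u \<in> lcomb R (V (Suc n)) (canon_eval F (Suc n)) (?B (Suc n))"
        if "u \<in> one_step_image G oplus (\<lambda>n. carrier (V n)) F n" for u
      proof -
        from that obtain g x where g: "g \<in> carrier (G (Suc n))" and x: "x \<in> carrier (V n)"
          and u: "u = F n (Suc n) (umor G oplus n (Suc n) g) x"
          unfolding one_step_image_def by blast
        have L: "linear_map R (V n) (V (Suc n)) (F n (Suc n) (umor G oplus n (Suc n) g))"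
          using g by (simp add: mod_functor_linear[OF MF] umor_in_uhom)
        have "\<exists>t'\<in>?B (Suc n). F n (Suc n) (umor G oplus n (Suc n) g) (canon_eval F n t)
            = canon_eval F (Suc n) t'" if "t \<in> ?B n" for t
          using canon_eval_morphism[OF S W _ g that] by (metis le_SucI order_refl)
        then show ?thesis
          unfolding u using Suc.IH x by (intro lcomb_linear_image[OF VM VM L img img]) auto
      qed
      show ?thesis
      proof
        fix v assume "v \<in> carrier (V (Suc n))"
        moreover have "d \<le> n" using False by simp
        ultimately obtain k :: nat and u where u: "\<forall>i<k. u i \<in> one_step_image G oplus (\<lambda>n. carrier (V n)) F n"
          and v: "v = finsum (V (Suc n)) u {..<k}"
          using step unfolding finite_sums_def by blast
        show "v \<in> lcomb R (V (Suc n)) (canon_eval F (Suc n)) (?B (Suc n))"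
          unfolding v using u one_step by (intro lcomb_finsum[OF VM img]) auto
      qed
    qed
  qed
qed

lemma mod_generated_le_iff_one_step_sums:
  fixes V :: "nat \<Rightarrow> ('r, 'm) module"
  assumes S: "stability_groupoid G oplus" and MF: "mod_functor G oplus R V F"
  shows "mod_generated_le G oplus R V F d \<longleftrightarrow> (\<forall>n\<ge>d. carrier (V (Suc n))
      \<subseteq> finite_sums (V (Suc n)) (one_step_image G oplus (\<lambda>n. carrier (V n)) F n))"
proof
  show "mod_generated_le G oplus R V F d \<Longrightarrow> \<forall>n\<ge>d. carrier (V (Suc n))
      \<subseteq> finite_sums (V (Suc n)) (one_step_image G oplus (\<lambda>n. carrier (V n)) F n)"
    using mod_generated_le_imp_one_step_sums[OF S MF] by blast
  show "mod_generated_le G oplus R V F d" if "\<forall>n\<ge>d. carrier (V (Suc n))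
      \<subseteq> finite_sums (V (Suc n)) (one_step_image G oplus (\<lambda>n. carrier (V n)) F n)"
    unfolding mod_generated_le_def
    using rep_nat_canon[OF mod_functor_set_functor[OF MF], of d]
      mod_span_canon_gens[OF S MF that, unfolded lcomb_def]
    by (intro exI[of _ "canon_gens (\<lambda>n. carrier (V n)) d"] exI[of _ fst] exI[of _ "canon_eval F"] conjI)
       (simp_all add: canon_gens_def)
qed

theorem proposition5p4:
  fixes G :: "nat \<Rightarrow> 'g monoid"
    and oplus :: "nat \<Rightarrow> nat \<Rightarrow> 'g \<Rightarrow> 'g \<Rightarrow> 'g"
    and b :: "nat \<Rightarrow> nat \<Rightarrow> 'g"
    and d :: nat
  assumes "braided_stability_groupoid G oplus b"
  shows "(\<forall>(V :: nat \<Rightarrow> 'a set) F. set_functor G oplus V F \<longrightarrow>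
            (set_generated_le G oplus V F d \<longleftrightarrow>
             (\<forall>n>d. V n \<subseteq> set_sigma_image G oplus b V F n)))
       \<and> (\<forall>(R :: ('r, 'z) ring_scheme) (V :: nat \<Rightarrow> ('r, 'm) module) F. mod_functor G oplus R V F \<longrightarrow>
            (mod_generated_le G oplus R V F d \<longleftrightarrow>
             (\<forall>n>d. carrier (V n) \<subseteq> mod_sigma_image G oplus b V F n)))"
proof -
  have S: "stability_groupoid G oplus" using assms by (rule braided_imp_stability_groupoid)
  have shift: "(\<forall>n>d. P n) \<longleftrightarrow> (\<forall>n\<ge>d. P (Suc n))" for P
    by (metis Suc_le_eq gr0_conv_Suc less_Suc_eq_le zero_less_iff_neq_zero le_zero_eq)
  show ?thesis
    by (simp add: shift set_sigma_image_Suc[OF assms] mod_sigma_image_Suc[OF assms]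
        set_generated_le_iff_one_step[OF S] mod_generated_le_iff_one_step_sums[OF S]
        mod_functor_set_functor)
qed

end
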